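(* Let $(R,v)$ be a discrete valuation domain and let $f=a_0+a_1x+\cdots+a_nx^n\in R[x]$ with $n\ge 2$ and $a_0a_n\neq 0$. Suppose there is an index $s\in\{0,1,\ldots,n-1\}$ such that: (a) $m_i(f)<m_s(f)$ for all $i\in\{0,1,\ldots,n-1\}$ with $i\neq s$; (b) the integer $d=\gcd\bigl(v(a_s)-v(a_n),\,n-s\bigr)$ satisfies $d=n(n-s)\bigl(m_s(f)-m_0(f)\bigr)$ if $s\neq 0$, and $d=1$ if $s=0$. Then either $f$ is irreducible in $R[x]$, or $f$ has a factor in $R[x]$ whose degree is zero or a multiple of $(n-s)/d$. Precisely: whenever $f=f_1f_2$ with $f_1,f_2\in R[x]$, the integer $(n-s)/d$ divides $\deg f_1$ or $\deg f_2$.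
   Context: $(R,v)$ is a discrete valuation domain with (discrete) valuation $v$, extended by $v(0)=+\infty$. For a polynomial $f=a_0+a_1x+\cdots+a_nx^n\in R[x]$ of degree $n$ (so $a_n\ne 0$) and $i\in\{0,\ldots,n-1\}$, define $m_i(f)=\dfrac{v(a_n)-v(a_i)}{n-i}$ (the slope of the segment joining $(i,v(a_i))$ and $(n,v(a_n))$; it equals $-\infty$ if $a_i=0$). *)

theory Defs
  imports "HOL-Computational_Algebra.Polynomial" "HOL-Library.Extended_Real"
begin

text \<open>A discrete valuation domain: an integral domain R together with a discrete
  valuation v : R - {0} -> N (v 0 = +infinity is handled by only using v on
  nonzero elements), such that R is the valuation ring of v, i.e.
  v(x) <= v(y) iff x divides y, and v is surjective onto N (there is a uniformizer).\<close>
definition discrete_valuation_domain :: "('a::idom \<Rightarrow> int) \<Rightarrow> bool" where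
  "discrete_valuation_domain v \<longleftrightarrow>
     (\<forall>x y. x \<noteq> 0 \<longrightarrow> y \<noteq> 0 \<longrightarrow> v (x * y) = v x + v y) \<and>
     (\<forall>x y. x \<noteq> 0 \<longrightarrow> y \<noteq> 0 \<longrightarrow> x + y \<noteq> 0 \<longrightarrow> v (x + y) \<ge> min (v x) (v y)) \<and>
     (\<forall>x. x \<noteq> 0 \<longrightarrow> v x \<ge> 0) \<and>
     (\<forall>x y. x \<noteq> 0 \<longrightarrow> y \<noteq> 0 \<longrightarrow> (x dvd y \<longleftrightarrow> v x \<le> v y)) \<and>
     (\<exists>p. p \<noteq> 0 \<and> v p = 1)"

definition slope_m :: "('a::idom \<Rightarrow> int) \<Rightarrow> 'a poly \<Rightarrow> nat \<Rightarrow> ereal" where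
  "slope_m v f i =
     (if coeff f i = 0 then -\<infinity>
      else ereal (real_of_int (v (lead_coeff f) - v (coeff f i)) / real (degree f - i)))"

end

theory Submission
  imports Defs
begin

(* Weight the term a_j x^j by q v(a_j) + p j. For q > 0 the minimal weight is additive under
   multiplication, and so are the first and the last index at which it is attained: the product
   of the two extreme minimal terms cannot be cancelled (Gauss' lemma along one edge of the
   Newton polygon).
   By (a), for the weight (n - s, v(a_s) - v(a_n)) the minimum of f is attained exactly at s and n.
   So in f = f1 f2 the last minimal index of each factor is its degree, and a factor whose first
   minimal index is 0 has degree divisible by (n - s)/d, because its two end coefficients lie on a
   line of slope (v(a_n) - v(a_s))/(n - s). If s = 0 both first indices vanish. If s > 0, (b)
   says that the edges [0, s] and [s, n] have determinant d; then [0, s] is itself an edge with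
   no interior lattice point. The factors split it into pieces with lattice end points, so one
   piece is all of it, and by convexity this forces one of the first indices to be 0. *)

lemma div_gcd_dvd_if_mult_eq:
  fixes p q x y :: int
  assumes "q \<noteq> 0" "q * x = p * y"
  shows "q div gcd p q dvd y"
proof -
  define g where "g = gcd p q"
  have "g \<noteq> 0"
    using assms(1) unfolding g_def by simp
  have q: "q = g * (q div g)" and p: "p = g * (p div g)"
    unfolding g_def by simp_all
  have "g * ((q div g) * x) = g * ((p div g) * y)"
    using assms(2) by (subst (asm) q, subst (asm) p) (simp add: ac_simps)
  then have "(q div g) dvd (p div g) * y"
    using \<open>g \<noteq> 0\<close> by (metis dvd_triv_left mult_left_cancel)
  moreover have "coprime (p div g) (q div g)"
    unfolding g_def using assms(1) by (intro div_gcd_coprime) simp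
  ultimately show ?thesis
    unfolding g_def by (simp add: coprime_commute coprime_dvd_mult_right_iff)
qed

lemma coeff_nonzero_if_slope_m_less: "slope_m v f i < slope_m v f s \<Longrightarrow> coeff f s \<noteq> 0"
  by (auto simp: slope_m_def)

lemma slope_m_less_iff:
  assumes "i < degree f" "j < degree f" "coeff f i \<noteq> 0" "coeff f j \<noteq> 0"
  shows "slope_m v f i < slope_m v f j \<longleftrightarrow>
    int (degree f - j) * (v (lead_coeff f) - v (coeff f i)) <
      (v (lead_coeff f) - v (coeff f j)) * int (degree f - i)"
proof -
  have "slope_m v f i < slope_m v f j \<longleftrightarrow>
      real (degree f - j) * real_of_int (v (lead_coeff f) - v (coeff f i)) <
        real_of_int (v (lead_coeff f) - v (coeff f j)) * real (degree f - i)"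
    using assms by (simp add: slope_m_def field_simps)
  also have "\<dots> \<longleftrightarrow> int (degree f - j) * (v (lead_coeff f) - v (coeff f i)) <
      (v (lead_coeff f) - v (coeff f j)) * int (degree f - i)"
    by (simp only: of_int_less_iff[symmetric, where 'a=real] of_int_mult of_int_of_nat_eq)
  finally show ?thesis .
qed

lemma scaled_slope_m_diff:
  assumes "0 < s" "s < degree f" "coeff f s \<noteq> 0" "coeff f 0 \<noteq> 0"
  shows "ereal (real (degree f) * real (degree f - s)) * (slope_m v f s - slope_m v f 0) =
    ereal (of_int (int (degree f) * (v (lead_coeff f) - v (coeff f s)) -
      int (degree f - s) * (v (lead_coeff f) - v (coeff f 0))))"
  using assms by (simp add: slope_m_def field_simps)
locale nonarch_valuation =
  fixes v :: "'a::idom \<Rightarrow> int"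
  assumes val_mult: "x \<noteq> 0 \<Longrightarrow> y \<noteq> 0 \<Longrightarrow> v (x * y) = v x + v y"
    and val_add: "x \<noteq> 0 \<Longrightarrow> y \<noteq> 0 \<Longrightarrow> x + y \<noteq> 0 \<Longrightarrow> min (v x) (v y) \<le> v (x + y)"

lemma discrete_valuation_domain_imp_nonarch_valuation:
  "discrete_valuation_domain v \<Longrightarrow> nonarch_valuation v"
  unfolding discrete_valuation_domain_def by unfold_locales blast+

context nonarch_valuation
begin

lemma val_one: "v 1 = 0"
  using val_mult[of 1 1] by simp

lemma val_uminus: "v (- x) = v x"
proof (cases "x = 0")
  case False
  have "v (-1) + v (-1) = 0"
    using val_mult[of "-1" "-1"] val_one by simp
  then show ?thesis
    using val_mult[of "-1" x] False by simp
qed simp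

lemma val_add_eq_left:
  assumes "x \<noteq> 0" "y \<noteq> 0" "v x < v y"
  shows "x + y \<noteq> 0 \<and> v (x + y) = v x"
proof -
  have "x + y \<noteq> 0"
  proof
    assume "x + y = 0"
    then have "y = - x"
      by (simp add: eq_neg_iff_add_eq_0 add.commute)
    then show False
      using assms(3) by (simp add: val_uminus)
  qed
  moreover have "v x \<le> v (x + y)"
    using val_add[OF assms(1,2) \<open>x + y \<noteq> 0\<close>] assms(3) by simp
  moreover have "min (v (x + y)) (v y) \<le> v x"
    using val_add[of "x + y" "- y"] assms(1,2) \<open>x + y \<noteq> 0\<close> by (simp add: val_uminus)
  ultimately show ?thesis
    using assms(3) by linarith
qed

lemma val_sum_ge:
  assumes "0 < q" "finite A" "\<And>a. a \<in> A \<Longrightarrow> t a \<noteq> 0 \<Longrightarrow> K \<le> q * v (t a)"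
    and "sum t A \<noteq> 0"
  shows "K \<le> q * v (sum t A)"
  using assms(2-)
proof (induction A rule: finite_induct)
  case (insert a A)
  show ?case
  proof (cases "t a = 0 \<or> sum t A = 0")
    case True
    then show ?thesis
      using insert by auto
  next
    case False
    then have "min (v (t a)) (v (sum t A)) \<le> v (sum t (insert a A))"
      using insert val_add[of "t a" "sum t A"] by simp
    then have "q * min (v (t a)) (v (sum t A)) \<le> q * v (sum t (insert a A))"
      using \<open>0 < q\<close> by simp
    moreover have "K \<le> q * min (v (t a)) (v (sum t A))"
      using insert False by (simp add: min_def)
    ultimately show ?thesis
      by linarith
  qed
qed simp

(* For q > 0 the minimal weight is attained exactly at the points (j, v(g_j)) on the supporting
   line of slope -p/q of the Newton polygon of g: an edge of that slope, or a single vertex. *)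
definition term_weight :: "int \<Rightarrow> int \<Rightarrow> 'a poly \<Rightarrow> nat \<Rightarrow> int" where
  "term_weight q p g j = q * v (coeff g j) + p * int j"

definition min_weight :: "int \<Rightarrow> int \<Rightarrow> 'a poly \<Rightarrow> int" where
  "min_weight q p g = Min (term_weight q p g ` {j. coeff g j \<noteq> 0})"

definition min_weight_indices :: "int \<Rightarrow> int \<Rightarrow> 'a poly \<Rightarrow> nat set" where
  "min_weight_indices q p g = {j. coeff g j \<noteq> 0 \<and> term_weight q p g j = min_weight q p g}"

definition first_min_index :: "int \<Rightarrow> int \<Rightarrow> 'a poly \<Rightarrow> nat" where
  "first_min_index q p g = Min (min_weight_indices q p g)"

definition last_min_index :: "int \<Rightarrow> int \<Rightarrow> 'a poly \<Rightarrow> nat" where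
  "last_min_index q p g = Max (min_weight_indices q p g)"

lemma finite_coeff_support: "finite {j. coeff g j \<noteq> 0}"
  by (rule finite_subset[of _ "{..degree g}"]) (auto intro: le_degree)

lemma min_weight_le: "coeff g j \<noteq> 0 \<Longrightarrow> min_weight q p g \<le> term_weight q p g j"
  unfolding min_weight_def using finite_coeff_support by (intro Min_le) auto

lemma min_weight_less: 
  "coeff g j \<noteq> 0 \<Longrightarrow> j \<notin> min_weight_indices q p g \<Longrightarrow> min_weight q p g < term_weight q p g j"
  using min_weight_le[of g j q p] unfolding min_weight_indices_def by auto

lemma finite_min_weight_indices: "finite (min_weight_indices q p g)"
  unfolding min_weight_indices_def by (rule finite_subset[OF _ finite_coeff_support]) auto

lemma min_weight_indices_nonempty:
  assumes "g \<noteq> 0"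
  shows "min_weight_indices q p g \<noteq> {}"
proof -
  have "{j. coeff g j \<noteq> 0} \<noteq> {}"
    using assms leading_coeff_neq_0 by blast
  then have "min_weight q p g \<in> term_weight q p g ` {j. coeff g j \<noteq> 0}"
    unfolding min_weight_def using finite_coeff_support by (intro Min_in) auto
  then show ?thesis
    unfolding min_weight_indices_def by auto
qed

lemma min_weight_eqI:
  assumes "coeff g j \<noteq> 0" "term_weight q p g j = w"
    and "\<And>k. coeff g k \<noteq> 0 \<Longrightarrow> w \<le> term_weight q p g k"
  shows "min_weight q p g = w"
  unfolding min_weight_def
proof (rule antisym)
  have "w \<in> term_weight q p g ` {j. coeff g j \<noteq> 0}"
    using assms(1,2) by blast
  then show "Min (term_weight q p g ` {j. coeff g j \<noteq> 0}) \<le> w"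
    by (rule Min_le[OF finite_imageI[OF finite_coeff_support]])
  show "w \<le> Min (term_weight q p g ` {j. coeff g j \<noteq> 0})"
    using assms finite_coeff_support[of g] by (subst Min_ge_iff) auto
qed

lemma min_weight_indices_eqI:
  assumes "j \<in> S" "\<And>k. k \<in> S \<Longrightarrow> coeff g k \<noteq> 0 \<and> term_weight q p g k = w"
    and "\<And>k. coeff g k \<noteq> 0 \<Longrightarrow> k \<notin> S \<Longrightarrow> w < term_weight q p g k"
  shows "min_weight_indices q p g = S"
proof -
  have "min_weight q p g = w"
    using assms by (intro min_weight_eqI[of g j]) (blast, blast, fastforce)
  then show ?thesis
    unfolding min_weight_indices_def using assms(2,3) by fastforce
qed

lemma min_weight_indices_weight_eq:
  assumes "j \<in> min_weight_indices q p g" "k \<in> min_weight_indices q p g"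
  shows "q * (v (coeff g j) - v (coeff g k)) = p * (int k - int j)"
  using assms unfolding min_weight_indices_def term_weight_def by (simp add: algebra_simps)

lemma first_min_index_in: "g \<noteq> 0 \<Longrightarrow> first_min_index q p g \<in> min_weight_indices q p g"
  unfolding first_min_index_def
  using finite_min_weight_indices min_weight_indices_nonempty by (rule Min_in)

lemma last_min_index_in: "g \<noteq> 0 \<Longrightarrow> last_min_index q p g \<in> min_weight_indices q p g"
  unfolding last_min_index_def
  using finite_min_weight_indices min_weight_indices_nonempty by (rule Max_in)

lemma first_min_index_le: "j \<in> min_weight_indices q p g \<Longrightarrow> first_min_index q p g \<le> j"
  unfolding first_min_index_def using finite_min_weight_indices by (rule Min_le)

lemma last_min_index_ge: "j \<in> min_weight_indices q p g \<Longrightarrow> j \<le> last_min_index q p g"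
  unfolding last_min_index_def using finite_min_weight_indices by (rule Max_ge)

lemma last_min_index_le_degree: "g \<noteq> 0 \<Longrightarrow> last_min_index q p g \<le> degree g"
  using last_min_index_in[of g q p] le_degree unfolding min_weight_indices_def by blast

lemma summand_weight:
  assumes "coeff g j \<noteq> 0" "coeff h k \<noteq> 0"
  shows "q * v (coeff g j * coeff h k) + p * int (j + k) = term_weight q p g j + term_weight q p h k"
  using val_mult[OF assms] unfolding term_weight_def by (simp add: algebra_simps)

lemma summand_weight_gt:
  assumes "coeff g j \<noteq> 0" "coeff h k \<noteq> 0"
    and "\<not> (j \<in> min_weight_indices q p g \<and> k \<in> min_weight_indices q p h)"
  shows "min_weight q p g + min_weight q p h < term_weight q p g j + term_weight q p h k"
  using assms min_weight_le[of g j q p] min_weight_le[of h k q p]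
    min_weight_less[of g j q p] min_weight_less[of h k q p] by auto

lemma partial_coeff_mult_weight_ge:
  assumes "0 < q" "J \<subseteq> {..i}"
    and "\<And>j. j \<in> J \<Longrightarrow> coeff g j \<noteq> 0 \<Longrightarrow> coeff h (i - j) \<noteq> 0 \<Longrightarrow>
           K \<le> term_weight q p g j + term_weight q p h (i - j)"
    and "(\<Sum>j\<in>J. coeff g j * coeff h (i - j)) \<noteq> 0"
  shows "K \<le> q * v (\<Sum>j\<in>J. coeff g j * coeff h (i - j)) + p * int i"
proof -
  have "K - p * int i \<le> q * v (\<Sum>j\<in>J. coeff g j * coeff h (i - j))"
  proof (rule val_sum_ge[OF assms(1) _ _ assms(4)])
    show "finite J"
      using assms(2) finite_subset by blast
    fix j assume j: "j \<in> J" "coeff g j * coeff h (i - j) \<noteq> 0"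
    then have "j + (i - j) = i"
      using assms(2) by auto
    with j summand_weight[of g j h "i - j" q p] assms(3)[of j]
    show "K - p * int i \<le> q * v (coeff g j * coeff h (i - j))"
      by auto
  qed
  then show ?thesis
    by simp
qed

lemma coeff_mult_weight_ge:
  assumes "0 < q" "coeff (g * h) i \<noteq> 0"
  shows "min_weight q p g + min_weight q p h \<le> term_weight q p (g * h) i"
proof -
  have "min_weight q p g + min_weight q p h \<le>
      q * v (\<Sum>j\<le>i. coeff g j * coeff h (i - j)) + p * int i"
    using assms(2) unfolding coeff_mult
    by (intro partial_coeff_mult_weight_ge[OF assms(1) order_refl]) (auto intro: add_mono min_weight_le)
  then show ?thesis
    unfolding term_weight_def coeff_mult by simp
qed

lemma coeff_mult_weight_gt:
  assumes "0 < q" "coeff (g * h) i \<noteq> 0"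
    and "\<And>j. j \<le> i \<Longrightarrow> j \<in> min_weight_indices q p g \<Longrightarrow> i - j \<in> min_weight_indices q p h \<Longrightarrow> False"
  shows "min_weight q p g + min_weight q p h < term_weight q p (g * h) i"
proof -
  have "min_weight q p g + min_weight q p h + 1 \<le>
      q * v (\<Sum>j\<le>i. coeff g j * coeff h (i - j)) + p * int i"
    using assms(2) unfolding coeff_mult
    by (intro partial_coeff_mult_weight_ge[OF assms(1) order_refl])
      (auto simp: add1_zle_eq intro!: summand_weight_gt dest: assms(3))
  then show ?thesis
    unfolding term_weight_def coeff_mult by simp
qed

lemma coeff_mult_weight_eq:
  assumes "0 < q" "j0 \<le> i"
    and "j0 \<in> min_weight_indices q p g" "i - j0 \<in> min_weight_indices q p h"
    and "\<And>j. j \<le> i \<Longrightarrow> j \<in> min_weight_indices q p g \<Longrightarrow> i - j \<in> min_weight_indices q p h \<Longrightarrow> j = j0"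
  shows "coeff (g * h) i \<noteq> 0 \<and> term_weight q p (g * h) i = min_weight q p g + min_weight q p h"
proof -
  define x where "x = coeff g j0 * coeff h (i - j0)"
  define y where "y = (\<Sum>j\<in>{..i} - {j0}. coeff g j * coeff h (i - j))"
  have x: "x \<noteq> 0" "q * v x + p * int i = min_weight q p g + min_weight q p h"
    using assms(2-4) summand_weight[of g j0 h "i - j0" q p]
    unfolding x_def min_weight_indices_def by auto
  have "x + y \<noteq> 0 \<and> v (x + y) = v x"
  proof (cases "y = 0")
    case False
    have "min_weight q p g + min_weight q p h + 1 \<le> q * v y + p * int i"
      unfolding y_def
      by (intro partial_coeff_mult_weight_ge[OF assms(1)])
        (use False in \<open>auto simp: add1_zle_eq y_def intro!: summand_weight_gt dest: assms(5)\<close>)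
    then have "q * v x < q * v y"
      using x(2) by linarith
    then have "v x < v y"
      using \<open>0 < q\<close> by simp
    then show ?thesis
      using val_add_eq_left x(1) False by blast
  qed (use x in simp)
  moreover have "coeff (g * h) i = x + y"
    unfolding coeff_mult x_def y_def using assms(2) by (simp add: sum.remove)
  ultimately show ?thesis
    using x(2) unfolding term_weight_def by simp
qed

lemma coeff_mult_first_min_indices:
  assumes "0 < q" "g \<noteq> 0" "h \<noteq> 0"
  shows "coeff (g * h) (first_min_index q p g + first_min_index q p h) \<noteq> 0 \<and>
    term_weight q p (g * h) (first_min_index q p g + first_min_index q p h) =
      min_weight q p g + min_weight q p h"
proof (rule coeff_mult_weight_eq[OF assms(1)])
  fix j assume "j \<le> first_min_index q p g + first_min_index q p h"
    and g: "j \<in> min_weight_indices q p g"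
    and h: "first_min_index q p g + first_min_index q p h - j \<in> min_weight_indices q p h"
  then show "j = first_min_index q p g"
    using first_min_index_le[OF g] first_min_index_le[OF h] by linarith
qed (use first_min_index_in[OF assms(2)] first_min_index_in[OF assms(3)] in auto)

lemma coeff_mult_last_min_indices:
  assumes "0 < q" "g \<noteq> 0" "h \<noteq> 0"
  shows "coeff (g * h) (last_min_index q p g + last_min_index q p h) \<noteq> 0 \<and>
    term_weight q p (g * h) (last_min_index q p g + last_min_index q p h) =
      min_weight q p g + min_weight q p h"
proof (rule coeff_mult_weight_eq[OF assms(1)])
  fix j assume "j \<le> last_min_index q p g + last_min_index q p h"
    and g: "j \<in> min_weight_indices q p g"
    and h: "last_min_index q p g + last_min_index q p h - j \<in> min_weight_indices q p h"
  then show "j = last_min_index q p g"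
    using last_min_index_ge[OF g] last_min_index_ge[OF h] by linarith
qed (use last_min_index_in[OF assms(2)] last_min_index_in[OF assms(3)] in auto)

lemma min_weight_mult:
  assumes "0 < q" "g \<noteq> 0" "h \<noteq> 0"
  shows "min_weight q p (g * h) = min_weight q p g + min_weight q p h"
  using coeff_mult_first_min_indices[OF assms] coeff_mult_weight_ge[OF assms(1)]
  by (intro min_weight_eqI) auto

lemma min_weight_indices_mult_bounds:
  assumes "0 < q" "g \<noteq> 0" "h \<noteq> 0" "i \<in> min_weight_indices q p (g * h)"
  shows "first_min_index q p g + first_min_index q p h \<le> i"
    and "i \<le> last_min_index q p g + last_min_index q p h"
proof -
  have i: "coeff (g * h) i \<noteq> 0" "\<not> min_weight q p g + min_weight q p h < term_weight q p (g * h) i"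
    using assms(4) min_weight_mult[OF assms(1-3)] unfolding min_weight_indices_def by auto
  have "\<exists>j\<le>i. j \<in> min_weight_indices q p g \<and> i - j \<in> min_weight_indices q p h"
    using coeff_mult_weight_gt[OF assms(1) i(1)] i(2) by blast
  then obtain j where "j \<le> i" "j \<in> min_weight_indices q p g" "i - j \<in> min_weight_indices q p h"
    by blast
  then show "first_min_index q p g + first_min_index q p h \<le> i"
    and "i \<le> last_min_index q p g + last_min_index q p h"
    using first_min_index_le[of j q p g] first_min_index_le[of "i - j" q p h]
      last_min_index_ge[of j q p g] last_min_index_ge[of "i - j" q p h] by linarith+
qed

lemma first_min_index_mult:
  assumes "0 < q" "g \<noteq> 0" "h \<noteq> 0"
  shows "first_min_index q p (g * h) = first_min_index q p g + first_min_index q p h"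
proof (rule antisym)
  show "first_min_index q p (g * h) \<le> first_min_index q p g + first_min_index q p h"
    using coeff_mult_first_min_indices[OF assms] min_weight_mult[OF assms]
    by (intro first_min_index_le) (simp add: min_weight_indices_def)
  show "first_min_index q p g + first_min_index q p h \<le> first_min_index q p (g * h)"
    using assms by (intro min_weight_indices_mult_bounds first_min_index_in) auto
qed

lemma last_min_index_mult:
  assumes "0 < q" "g \<noteq> 0" "h \<noteq> 0"
  shows "last_min_index q p (g * h) = last_min_index q p g + last_min_index q p h"
proof (rule antisym)
  show "last_min_index q p g + last_min_index q p h \<le> last_min_index q p (g * h)"
    using coeff_mult_last_min_indices[OF assms] min_weight_mult[OF assms]
    by (intro last_min_index_ge) (simp add: min_weight_indices_def)
  show "last_min_index q p (g * h) \<le> last_min_index q p g + last_min_index q p h"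
    using assms by (intro min_weight_indices_mult_bounds last_min_index_in) auto
qed

(* Convexity of the Newton polygon: edges appear in the order of increasing slope. *)
lemma last_min_index_le_first_min_index:
  assumes "g \<noteq> 0" "0 \<le> q1" "0 \<le> q2" "q1 * p2 < q2 * p1"
  shows "last_min_index q1 p1 g \<le> first_min_index q2 p2 g"
proof (rule ccontr)
  define t where "t = last_min_index q1 p1 g"
  define u where "u = first_min_index q2 p2 g"
  assume "\<not> t \<le> u"
  define k where "k = int t - int u"
  define D where "D = v (coeff g t) - v (coeff g u)"
  have t: "t \<in> min_weight_indices q1 p1 g" and u: "u \<in> min_weight_indices q2 p2 g"
    unfolding t_def u_def using assms(1) by (auto intro: first_min_index_in last_min_index_in)
  have "term_weight q1 p1 g t \<le> term_weight q1 p1 g u"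
    using t u min_weight_le[of g u q1 p1] unfolding min_weight_indices_def by auto
  then have "q2 * (q1 * D) \<le> q2 * (- p1 * k)"
    using assms(3) unfolding term_weight_def D_def k_def by (intro mult_left_mono) (auto simp: algebra_simps)
  moreover have "term_weight q2 p2 g u \<le> term_weight q2 p2 g t"
    using t u min_weight_le[of g t q2 p2] unfolding min_weight_indices_def by auto
  then have "q1 * (- p2 * k) \<le> q1 * (q2 * D)"
    using assms(2) unfolding term_weight_def D_def k_def by (intro mult_left_mono) (auto simp: algebra_simps)
  ultimately have "(q2 * p1 - q1 * p2) * k \<le> 0"
    by (simp add: algebra_simps)
  moreover have "0 < k"
    using \<open>\<not> t \<le> u\<close> unfolding k_def by simp
  ultimately show False
    using assms(4) by (simp add: mult_le_0_iff)
qed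

lemma min_weight_indices_dominant_slope:
  assumes "s < degree f" "coeff f s \<noteq> 0"
    and "\<forall>i<degree f. i \<noteq> s \<longrightarrow> slope_m v f i < slope_m v f s"
  shows "min_weight_indices (int (degree f - s)) (v (coeff f s) - v (lead_coeff f)) f = {s, degree f}"
proof (rule min_weight_indices_eqI[where j = s])
  let ?c = "int (degree f - s)" and ?b = "v (coeff f s) - v (lead_coeff f)"
  have "f \<noteq> 0"
    using assms(1) by auto
  then show "k \<in> {s, degree f} \<Longrightarrow>
      coeff f k \<noteq> 0 \<and> term_weight ?c ?b f k = term_weight ?c ?b f s" for k
    using assms(1,2) by (auto simp: term_weight_def algebra_simps)
  fix k assume k: "coeff f k \<noteq> 0" "k \<notin> {s, degree f}"
  then have "k < degree f"
    using le_degree[of f k] by auto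
  with k assms show "term_weight ?c ?b f s < term_weight ?c ?b f k"
    by (auto simp: term_weight_def algebra_simps slope_m_less_iff)
qed simp

lemma min_weight_indices_adjacent_edge:
  assumes "0 < c" "0 < s" "s < n" "coeff f 0 \<noteq> 0"
    and edge: "min_weight_indices c b f = {s, n}"
    and a: "a = v (coeff f 0) - v (coeff f s)"
    and det: "c * a - int s * b = gcd b c"
  shows "min_weight_indices (int s) a f = {0, s}" and "coprime (int s) a"
proof -
  define g where "g = gcd b c"
  have "0 < g"
    using assms(1) unfolding g_def by simp
  obtain c' b' where c': "c = g * c'" and b': "b = g * b'"
    unfolding g_def by (meson dvdE gcd_dvd1 gcd_dvd2)
  have "g * (c' * a - int s * b') = g * 1"
    using det unfolding g_def[symmetric] by (simp add: c' b' algebra_simps)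
  then have unimodular: "c' * a - int s * b' = 1"
    using \<open>0 < g\<close> by (simp only: mult_cancel_left) simp
  then have unimodular': "int s * b' + 1 = c' * a"
    by linarith
  have "gcd (int s) a dvd c' * a - int s * b'"
    by (intro dvd_diff dvd_mult dvd_mult2 gcd_dvd1 gcd_dvd2)
  then show "coprime (int s) a"
    using unimodular by (simp add: coprime_iff_gcd_eq_1)
  have "0 < c'"
    using assms(1) \<open>0 < g\<close> c' by (simp add: zero_less_mult_iff)
  have s_edge: "s \<in> min_weight_indices c b f"
    using edge by simp
  show "min_weight_indices (int s) a f = {0, s}"
  proof (rule min_weight_indices_eqI[where j = 0])
    show "k \<in> {0, s} \<Longrightarrow> coeff f k \<noteq> 0 \<and> term_weight (int s) a f k = term_weight (int s) a f 0" for k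
      using assms(4) s_edge unfolding a min_weight_indices_def term_weight_def
      by (auto simp: algebra_simps)
    fix k assume k: "coeff f k \<noteq> 0" "k \<notin> {0, s}"
    define x where "x = int k - int s"
    define y where "y = v (coeff f k) - v (coeff f s)"
    have gap: "g * (c' * y + b' * x) = term_weight c b f k - term_weight c b f s"
      unfolding term_weight_def x_def y_def c' b' by (simp add: algebra_simps)
    moreover have "term_weight c b f s \<le> term_weight c b f k"
      using s_edge min_weight_le[OF k(1)] unfolding min_weight_indices_def by simp
    ultimately have "0 \<le> g * (c' * y + b' * x)"
      by simp
    then have "0 \<le> c' * y + b' * x"
      using \<open>0 < g\<close> by (simp add: zero_le_mult_iff)
    have "0 < int s * (c' * y + b' * x) + x"
    proof (cases "c' * y + b' * x = 0")
      case True
      then have "k \<in> min_weight_indices c b f"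
        using gap s_edge k(1) unfolding min_weight_indices_def by simp
      then show ?thesis
        using True k(2) assms(3) edge unfolding x_def by auto
    next
      case False
      then have "int s * 1 \<le> int s * (c' * y + b' * x)"
        using \<open>0 \<le> c' * y + b' * x\<close> by (intro mult_left_mono) auto
      moreover have "0 < k"
        using k(2) by simp
      ultimately show ?thesis
        unfolding x_def by linarith
    qed
    (* As c' a - s b' = 1, the (c, b)-excess of the term k over the term s controls
       its (s, a)-excess over the term 0. *)
    also have "int s * (c' * y + b' * x) + x = int s * (c' * y) + x * (int s * b' + 1)"
      by (simp add: algebra_simps)
    also have "\<dots> = c' * (int s * y + a * x)"
      unfolding unimodular' by (simp add: algebra_simps)
    finally have "0 < int s * y + a * x"
      using \<open>0 < c'\<close> by (simp add: zero_less_mult_iff)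
    then show "term_weight (int s) a f 0 < term_weight (int s) a f k"
      unfolding term_weight_def x_def y_def a by (simp add: algebra_simps)
  qed simp
qed

lemma first_min_index_factor_eq_0:
  assumes "f1 \<noteq> 0" "f2 \<noteq> 0" "0 < q" "0 < s" "coprime (int s) a" "int s * b < q * a"
    and "first_min_index (int s) a (f1 * f2) = 0" "last_min_index (int s) a (f1 * f2) = s"
    and "first_min_index q b (f1 * f2) = s"
  shows "first_min_index q b f1 = 0 \<or> first_min_index q b f2 = 0"
proof -
  define t where "t = last_min_index (int s) a f1"
  have "0 < int s"
    using assms(4) by simp
  have first: "first_min_index (int s) a f1 = 0"
    using assms(7) first_min_index_mult[OF \<open>0 < int s\<close> assms(1,2)] by simp
  have "t + last_min_index (int s) a f2 = s"
    using assms(8) last_min_index_mult[OF \<open>0 < int s\<close> assms(1,2)] unfolding t_def by simp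
  moreover have "first_min_index q b f1 + first_min_index q b f2 = s"
    using assms(9) first_min_index_mult[OF assms(3,1,2)] by simp
  moreover have "t \<le> first_min_index q b f1"
    and "last_min_index (int s) a f2 \<le> first_min_index q b f2"
    unfolding t_def using assms(1-3,6) by (auto intro: last_min_index_le_first_min_index)
  ultimately have t: "t = first_min_index q b f1" "t \<le> s"
    by linarith+
  have "int s * (v (coeff f1 0) - v (coeff f1 t)) = a * int t"
    using min_weight_indices_weight_eq[OF first_min_index_in last_min_index_in] assms(1) first
    unfolding t_def by (metis diff_zero of_nat_0)
  then have "int s dvd a * int t"
    by (metis dvd_triv_left)
  with assms(5) have "s dvd t"
    by (simp add: coprime_dvd_mult_right_iff)
  with t(2) have "t = 0 \<or> t = s"
    by (metis dvd_imp_le le_antisym neq0_conv)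
  with t(1) \<open>first_min_index q b f1 + first_min_index q b f2 = s\<close> show ?thesis
    by auto
qed

lemma first_min_index_factor_eq_0_if_gcd_slope_gap:
  assumes "f = f1 * f2" "f \<noteq> 0" "0 < s" "s < degree f" "coeff f 0 \<noteq> 0"
    and c: "c = int (degree f - s)" and b: "b = v (coeff f s) - v (lead_coeff f)"
    and edge: "min_weight_indices c b f = {s, degree f}"
    and gap: "ereal (real_of_int (gcd b c)) =
      ereal (real (degree f) * real (degree f - s)) * (slope_m v f s - slope_m v f 0)"
  shows "first_min_index c b f1 = 0 \<or> first_min_index c b f2 = 0"
proof -
  define a where "a = v (coeff f 0) - v (coeff f s)"
  have "0 < c" "f1 \<noteq> 0" "f2 \<noteq> 0"
    using assms(1,2,4) c by auto
  have "coeff f s \<noteq> 0"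
    using edge unfolding min_weight_indices_def by auto
  with assms(3-5) gap have "gcd b c = int (degree f) * (v (lead_coeff f) - v (coeff f s)) -
      int (degree f - s) * (v (lead_coeff f) - v (coeff f 0))"
    using scaled_slope_m_diff[of s f v] by (simp del: of_int_diff of_int_mult)
  then have det: "c * a - int s * b = gcd b c"
    using assms(4) unfolding a_def b c by (simp add: algebra_simps)
  moreover have "0 < gcd b c"
    using \<open>0 < c\<close> by simp
  ultimately have "int s * b < c * a"
    by linarith
  have "min_weight_indices (int s) a f = {0, s}" "coprime (int s) a"
    using min_weight_indices_adjacent_edge[OF \<open>0 < c\<close> assms(3,4,5) edge a_def det] by auto
  with edge show ?thesis
    using first_min_index_factor_eq_0[OF \<open>f1 \<noteq> 0\<close> \<open>f2 \<noteq> 0\<close> \<open>0 < c\<close> assms(3)]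
      \<open>int s * b < c * a\<close> assms(1,3,4) unfolding first_min_index_def last_min_index_def by auto
qed

lemma div_gcd_dvd_degree:
  assumes "0 < q" "g \<noteq> 0" "first_min_index q p g = 0" "last_min_index q p g = degree g"
  shows "q div gcd p q dvd int (degree g)"
proof -
  have "q * (v (coeff g 0) - v (coeff g (degree g))) = p * int (degree g)"
    using min_weight_indices_weight_eq[OF first_min_index_in last_min_index_in] assms(2-4)
    by (metis diff_zero of_nat_0)
  with assms(1) show ?thesis
    by (intro div_gcd_dvd_if_mult_eq) auto
qed

lemma factor_degree_dvd:
  assumes "0 < q" "f = f1 * f2" "f \<noteq> 0" "last_min_index q p f = degree f"
    and "first_min_index q p f1 = 0 \<or> first_min_index q p f2 = 0"
  shows "q div gcd p q dvd int (degree f1) \<or> q div gcd p q dvd int (degree f2)"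
proof -
  have "f1 \<noteq> 0" "f2 \<noteq> 0"
    using assms(2,3) by auto
  then have "last_min_index q p f1 + last_min_index q p f2 = degree f1 + degree f2"
    using assms(1,2,4) last_min_index_mult by (simp add: degree_mult_eq)
  then have "last_min_index q p f1 = degree f1" "last_min_index q p f2 = degree f2"
    using last_min_index_le_degree[OF \<open>f1 \<noteq> 0\<close>, of q p]
      last_min_index_le_degree[OF \<open>f2 \<noteq> 0\<close>, of q p] by linarith+
  with assms(1,5) \<open>f1 \<noteq> 0\<close> \<open>f2 \<noteq> 0\<close> show ?thesis
    using div_gcd_dvd_degree by blast
qed

end

theorem theorem1:
  fixes v :: "'a::idom \<Rightarrow> int" and f :: "'a poly" and s :: nat and d :: int
  assumes dvd: "discrete_valuation_domain v"
    and deg: "degree f \<ge> 2"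
    and nz: "coeff f 0 * lead_coeff f \<noteq> 0"
    and s: "s < degree f"
    and a: "\<forall>i < degree f. i \<noteq> s \<longrightarrow> slope_m v f i < slope_m v f s"
    and d_def: "d = gcd (v (coeff f s) - v (lead_coeff f)) (int (degree f - s))"
    and b: "if s \<noteq> 0
            then ereal (real_of_int d) =
                   ereal (real (degree f) * real (degree f - s)) * (slope_m v f s - slope_m v f 0)
            else d = 1"
  shows "\<forall>f1 f2. f = f1 * f2 \<longrightarrow>
           (int (degree f - s) div d) dvd int (degree f1) \<or>
           (int (degree f - s) div d) dvd int (degree f2)"
proof (intro allI impI)
  interpret nonarch_valuation v
    using dvd by (rule discrete_valuation_domain_imp_nonarch_valuation)
  fix f1 f2 assume f: "f = f1 * f2"
  define c where "c = int (degree f - s)"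
  define b where "b = v (coeff f s) - v (lead_coeff f)"
  have "0 < c" "f \<noteq> 0" "f1 \<noteq> 0" "f2 \<noteq> 0" "coeff f 0 \<noteq> 0"
    using s nz f unfolding c_def by auto
  have "(if s = 0 then 1 else 0) < degree f"
    using deg s by auto
  then have "slope_m v f (if s = 0 then 1 else 0) < slope_m v f s"
    using a by simp
  then have "coeff f s \<noteq> 0"
    by (rule coeff_nonzero_if_slope_m_less)
  then have edge: "min_weight_indices c b f = {s, degree f}"
    using min_weight_indices_dominant_slope[OF s] a unfolding c_def b_def by blast
  then have first: "first_min_index c b f = s" and last: "last_min_index c b f = degree f"
    using s unfolding first_min_index_def last_min_index_def by auto
  have "first_min_index c b f1 = 0 \<or> first_min_index c b f2 = 0"
  proof (cases "s = 0")
    case True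
    then show ?thesis
      using first first_min_index_mult[OF \<open>0 < c\<close> \<open>f1 \<noteq> 0\<close> \<open>f2 \<noteq> 0\<close>] f by simp
  next
    case False
    then show ?thesis
      using first_min_index_factor_eq_0_if_gcd_slope_gap[OF f \<open>f \<noteq> 0\<close> _ s \<open>coeff f 0 \<noteq> 0\<close> c_def b_def edge]
        b d_def unfolding b_def c_def by simp
  qed
  then show "int (degree f - s) div d dvd int (degree f1) \<or> int (degree f - s) div d dvd int (degree f2)"
    using factor_degree_dvd[OF \<open>0 < c\<close> f \<open>f \<noteq> 0\<close> last] by (simp add: d_def b_def c_def)
qed

end
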